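(* Let $d\in\mathbb{N}$ and let $(A,B),(C,D)$ be pairs of complex $d\times d$ matrices with $\operatorname{diag}(A)=\operatorname{diag}(B)$ and $\operatorname{diag}(C)=\operatorname{diag}(D)$. Suppose that, for $i=1,2$, the linear maps $\Phi^{(i)}_{(A,B)}$ and $\Phi^{(i)}_{(C,D)}$ on $\mathcal{M}_d(\mathbb{C})$ are PPT. Then for all $i,j\in\{1,2\}$ the composition $\Phi^{(i)}_{(A,B)}\circ\Phi^{(j)}_{(C,D)}$ is entanglement breaking.
   Context: $\mathcal{M}_d(\mathbb{C})$ denotes the complex $d\times d$ matrices, $\odot$ the entrywise (Hadamard) product, $X^\top$ the transpose in the standard basis, $\operatorname{diag}(X)$ both the column vector of diagonal entries of $X$ (written $|\operatorname{diag}X\rangle$) and, for a vector $v$, $\operatorname{diag}(v)$ is the diagonal matrix with diagonal $v$; for a matrix $B$, $\operatorname{diag}B$ denotes the diagonal matrix with the same diagonal as $B$ and $\widetilde B=B-\operatorname{diag}B$. For a pair $(A,B)$ with equal diagonals, define $\Phi^{(1)}_{(A,B)}(X)=\operatorname{diag}(A|\operatorname{diag}X\rangle)+\widetilde B\odot X^\top$ and $\Phi^{(2)}_{(A,B)}(X)=\operatorname{diag}(A|\operatorname{diag}X\rangle)+\widetilde B\odot X$. A linear map $\Phi:\mathcal{M}_d(\mathbb{C})\to\mathcal{M}_d(\mathbb{C})$ is completely positive if $\mathrm{id}_n\otimes\Phi$ maps positive semidefinite matrices to positive semidefinite matrices for all $n$; completely copositive if $\Phi\circ\top$ is completely positive;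 PPT if it is both completely positive and completely copositive. $\Phi$ is entanglement breaking if $(\mathrm{id}\otimes\Phi)(X)$ is separable (in the convex hull of $P\otimes Q$ with $P,Q$ positive semidefinite) for every positive semidefinite $X\in\mathcal{M}_d(\mathbb{C})\otimes\mathcal{M}_d(\mathbb{C})$. *)

theory Defs
  imports Complex_Main "HOL-Library.Complex_Order"
begin

text \<open>A complex d x d matrix is represented as a function nat => nat => complex;
  only the entries with both indices below d are relevant.\<close>

type_synonym cmat = "nat \<Rightarrow> nat \<Rightarrow> complex"

text \<open>Positive semidefiniteness on an index set I (complex order: 0 <= z means z
  real and nonnegative; over C this also forces hermiticity).\<close>
definition psd_on :: "'i set \<Rightarrow> ('i \<Rightarrow> 'i \<Rightarrow> complex) \<Rightarrow> bool" where
  "psd_on I M \<longleftrightarrow> (\<forall>v :: 'i \<Rightarrow> complex. 0 \<le> (\<Sum>i\<in>I. \<Sum>j\<in>I. cnj (v i) * M i j * v j))"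

definition Phi1 :: "nat \<Rightarrow> cmat \<Rightarrow> cmat \<Rightarrow> cmat \<Rightarrow> cmat" where
  "Phi1 d A B X = (\<lambda>i j. if i = j then (\<Sum>k<d. A i k * X k k) else B i j * X j i)"

definition Phi2 :: "nat \<Rightarrow> cmat \<Rightarrow> cmat \<Rightarrow> cmat \<Rightarrow> cmat" where
  "Phi2 d A B X = (\<lambda>i j. if i = j then (\<Sum>k<d. A i k * X k k) else B i j * X i j)"

text \<open>Matrices in M_n tensor M_d, indexed by pairs (i,a) with i < n, a < d.
  The amplification id_n tensor Phi acts blockwise.\<close>
definition ampl :: "nat \<Rightarrow> (cmat \<Rightarrow> cmat) \<Rightarrow> (nat \<times> nat \<Rightarrow> nat \<times> nat \<Rightarrow> complex)
                     \<Rightarrow> (nat \<times> nat \<Rightarrow> nat \<times> nat \<Rightarrow> complex)" where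
  "ampl d \<Phi> X = (\<lambda>(i, a) (j, b).
      \<Phi> (\<lambda>a' b'. if a' < d \<and> b' < d then X (i, a') (j, b') else 0) a b)"

definition transp :: "cmat \<Rightarrow> cmat" where
  "transp X = (\<lambda>i j. X j i)"

definition completely_positive :: "nat \<Rightarrow> (cmat \<Rightarrow> cmat) \<Rightarrow> bool" where
  "completely_positive d \<Phi> \<longleftrightarrow>
     (\<forall>n X. psd_on ({..<n} \<times> {..<d}) X \<longrightarrow> psd_on ({..<n} \<times> {..<d}) (ampl d \<Phi> X))"

definition completely_copositive :: "nat \<Rightarrow> (cmat \<Rightarrow> cmat) \<Rightarrow> bool" where
  "completely_copositive d \<Phi> \<longleftrightarrow> completely_positive d (\<Phi> \<circ> transp)"

definition PPT :: "nat \<Rightarrow> (cmat \<Rightarrow> cmat) \<Rightarrow> bool" where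
  "PPT d \<Phi> \<longleftrightarrow> completely_positive d \<Phi> \<and> completely_copositive d \<Phi>"

definition separable :: "nat \<Rightarrow> (nat \<times> nat \<Rightarrow> nat \<times> nat \<Rightarrow> complex) \<Rightarrow> bool" where
  "separable d X \<longleftrightarrow>
     (\<exists>(k::nat) (w::nat \<Rightarrow> real) (P::nat \<Rightarrow> cmat) (Q::nat \<Rightarrow> cmat).
        (\<forall>l<k. w l \<ge> 0 \<and> psd_on {..<d} (P l) \<and> psd_on {..<d} (Q l)) \<and>
        (\<Sum>l<k. w l) = 1 \<and>
        (\<forall>i<d. \<forall>a<d. \<forall>j<d. \<forall>b<d.
            X (i, a) (j, b) = (\<Sum>l<k. complex_of_real (w l) * P l i j * Q l a b)))"

definition entanglement_breaking :: "nat \<Rightarrow> (cmat \<Rightarrow> cmat) \<Rightarrow> bool" where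
  "entanglement_breaking d \<Phi> \<longleftrightarrow>
     (\<forall>X. psd_on ({..<d} \<times> {..<d}) X \<longrightarrow> separable d (ampl d \<Phi> X))"

end

theory Submission
  imports Defs
begin

(*
  Complete positivity of Phi^(1)_(A,B) and Phi^(2)_(A,B) is read off from 2x2 principal minors
  of their Choi matrices: A is entrywise nonnegative, B is hermitian off the diagonal, and
  |B_ij|^2 <= A_ii A_jj, |B_ij|^2 <= A_ij A_ji.  Up to a transpose of the output, each of the
  four compositions is Phi^(2)_(AC, N) with N the entrywise product of B or B^T with D or D^T,
  and the bounds for (A,B) and (C,D) multiply to bounds for (AC, N).  These let the map split
  into one 2x2 block per pair i < j, carrying the entries (i,j) and (j,i), plus a nonnegative
  diagonal remainder.  Each block is a sum of four rank-one measure-and-prepare terms, and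
  measure-and-prepare maps are entanglement breaking.
*)

section \<open>Positive semidefinite matrices\<close>

lemma quadratic_nonneg_imp_discriminant:
  fixes p b c :: real
  assumes "0 \<le> p" and nonneg: "\<And>t. 0 \<le> p * t\<^sup>2 + 2 * b * t + c"
  shows "b\<^sup>2 \<le> p * c"
proof (cases "p = 0")
  case True
  then have "b = 0"
    using nonneg[of "- (c + 1) / (2 * b)"] nonneg[of 0] by (cases "b = 0") (auto simp: field_simps)
  then show ?thesis using nonneg[of 0] True by simp
next
  case False
  with assms(1) have "0 < p" by simp
  have "0 \<le> p * (- b / p)\<^sup>2 + 2 * b * (- b / p) + c" by (rule nonneg)
  also have "\<dots> = c - b\<^sup>2 / p" using \<open>0 < p\<close> by (simp add: field_simps power2_eq_square)
  finally show ?thesis using \<open>0 < p\<close> by (simp add: field_simps)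
qed

lemma psd_on_subset:
  assumes "psd_on I M" and "finite I" and "S \<subseteq> I"
  shows "psd_on S M"
  unfolding psd_on_def
proof
  fix v :: "'a \<Rightarrow> complex"
  define u where "u k = (if k \<in> S then v k else 0)" for k
  have inner: "(\<Sum>j\<in>I. cnj (u i) * M i j * u j) = (\<Sum>j\<in>S. cnj (v i) * M i j * v j)" if "i \<in> S" for i
    using assms(2,3) that by (intro sum.mono_neutral_cong_right) (auto simp: u_def)
  have "(\<Sum>i\<in>I. \<Sum>j\<in>I. cnj (u i) * M i j * u j) = (\<Sum>i\<in>S. \<Sum>j\<in>S. cnj (v i) * M i j * v j)"
    using assms(2,3) by (intro sum.mono_neutral_cong_right) (auto simp: u_def inner)
  then show "0 \<le> (\<Sum>i\<in>S. \<Sum>j\<in>S. cnj (v i) * M i j * v j)"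
    using spec[OF assms(1)[unfolded psd_on_def], of u] by simp
qed

lemma psd_on_diag_nonneg:
  assumes "psd_on I M" and "finite I" and "x \<in> I"
  shows "0 \<le> M x x"
proof -
  have "psd_on {x} M" using psd_on_subset assms by blast
  from spec[OF this[unfolded psd_on_def], of "\<lambda>_. 1"] show ?thesis by simp
qed

lemma psd_on_off_diag_entry:
  assumes "psd_on I M" and "finite I" and "x \<in> I" and "y \<in> I" and "x \<noteq> y"
  shows "M y x = cnj (M x y)" and "(cmod (M x y))\<^sup>2 \<le> Re (M x x) * Re (M y y)"
proof -
  have psd: "psd_on {x, y} M" by (rule psd_on_subset[OF assms(1,2)]) (use assms(3,4) in simp)
  have form: "0 \<le> cnj \<alpha> * M x x * \<alpha> + cnj \<alpha> * M x y * \<beta> + cnj \<beta> * M y x * \<alpha> + cnj \<beta> * M y y * \<beta>"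
    for \<alpha> \<beta>
    using spec[OF psd[unfolded psd_on_def], of "\<lambda>k. if k = x then \<alpha> else \<beta>"] \<open>x \<noteq> y\<close>
    by (simp add: algebra_simps)
  have "0 \<le> M x x" "0 \<le> M y y" using form[of 1 0] form[of 0 1] by simp_all
  then have real_diag: "M x x = of_real (Re (M x x))" "M y y = of_real (Re (M y y))"
    by (simp_all add: less_eq_complex_def complex_eq_iff)
  have "Im (M x y) + Im (M y x) = 0"
    using form[of 1 1] \<open>0 \<le> M x x\<close> \<open>0 \<le> M y y\<close> by (simp add: less_eq_complex_def)
  moreover have "Re (M x y) = Re (M y x)"
    using form[of 1 \<i>] \<open>0 \<le> M x x\<close> \<open>0 \<le> M y y\<close> by (simp add: less_eq_complex_def algebra_simps)
  ultimately show hermitian: "M y x = cnj (M x y)" by (simp add: complex_eq_iff)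
  define n where "n = (cmod (M x y))\<^sup>2"
  have nsq: "complex_of_real n = M x y * cnj (M x y)" unfolding n_def by (rule complex_norm_square)
  have "0 \<le> Re (M x x) * t\<^sup>2 + 2 * (- n) * t + n * Re (M y y)" for t
  proof -
    have "0 \<le> cnj (of_real t) * M x x * of_real t + cnj (of_real t) * M x y * (- cnj (M x y))
        + cnj (- cnj (M x y)) * M y x * of_real t + cnj (- cnj (M x y)) * M y y * (- cnj (M x y))"
      by (rule form)
    also have "\<dots> = of_real (Re (M x x) * t\<^sup>2 + 2 * (- n) * t + n * Re (M y y))"
      unfolding hermitian using nsq by (simp add: real_diag[symmetric] algebra_simps power2_eq_square)
    finally show ?thesis by (simp add: less_eq_complex_def)
  qed
  then have "n\<^sup>2 \<le> Re (M x x) * (n * Re (M y y))"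
    using quadratic_nonneg_imp_discriminant[of "Re (M x x)" "- n" "n * Re (M y y)"] \<open>0 \<le> M x x\<close>
    by (simp add: less_eq_complex_def)
  moreover have "0 \<le> n" by (simp add: n_def)
  moreover have "0 \<le> Re (M x x) * Re (M y y)"
    using \<open>0 \<le> M x x\<close> \<open>0 \<le> M y y\<close> by (simp add: less_eq_complex_def)
  ultimately have "n \<le> Re (M x x) * Re (M y y)"
    by (cases "n = 0") (auto simp: power2_eq_square mult.assoc mult_le_cancel_left_pos)
  then show "(cmod (M x y))\<^sup>2 \<le> Re (M x x) * Re (M y y)" by (simp add: n_def)
qed

lemma psd_on_rank_one: "psd_on I (\<lambda>a b. q a * cnj (q b))"
  unfolding psd_on_def
proof
  fix v :: "'a \<Rightarrow> complex"
  define s where "s = (\<Sum>i\<in>I. cnj (v i) * q i)"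
  have "(\<Sum>i\<in>I. \<Sum>j\<in>I. cnj (v i) * (q i * cnj (q j)) * v j) = s * cnj s"
    unfolding s_def cnj_sum sum_product by (intro sum.cong refl) (simp add: mult_ac)
  then show "0 \<le> (\<Sum>i\<in>I. \<Sum>j\<in>I. cnj (v i) * (q i * cnj (q j)) * v j)"
    by (simp add: complex_mult_cnj less_eq_complex_def)
qed

lemma psd_on_scale:
  assumes "psd_on I M" and "0 \<le> c"
  shows "psd_on I (\<lambda>i j. of_real c * M i j)"
  unfolding psd_on_def
proof
  fix v :: "'a \<Rightarrow> complex"
  have "(\<Sum>i\<in>I. \<Sum>j\<in>I. cnj (v i) * (of_real c * M i j) * v j)
      = of_real c * (\<Sum>i\<in>I. \<Sum>j\<in>I. cnj (v i) * M i j * v j)"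
    by (simp add: sum_distrib_left mult_ac)
  moreover have "0 \<le> (\<Sum>i\<in>I. \<Sum>j\<in>I. cnj (v i) * M i j * v j)"
    using assms(1) unfolding psd_on_def by blast
  ultimately show "0 \<le> (\<Sum>i\<in>I. \<Sum>j\<in>I. cnj (v i) * (of_real c * M i j) * v j)"
    using assms(2) by (simp add: less_eq_complex_def)
qed

section \<open>Measure-and-prepare maps\<close>

definition quad_form :: "nat \<Rightarrow> (nat \<Rightarrow> complex) \<Rightarrow> cmat \<Rightarrow> complex" where
  "quad_form d r Y = (\<Sum>e<d. \<Sum>c<d. cnj (r e) * Y e c * r c)"

lemma quad_form_cong:
  "(\<And>e c. e < d \<Longrightarrow> c < d \<Longrightarrow> Y e c = Z e c) \<Longrightarrow> quad_form d r Y = quad_form d r Z"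
  unfolding quad_form_def by (intro sum.cong refl) auto

lemma quad_form_supported:
  assumes "S \<subseteq> {..<d}" and "\<And>k. k \<notin> S \<Longrightarrow> r k = 0"
  shows "quad_form d r Y = (\<Sum>e\<in>S. \<Sum>c\<in>S. cnj (r e) * Y e c * r c)"
  unfolding quad_form_def using assms
  by (intro sum.mono_neutral_cong_right) (auto intro!: sum.mono_neutral_cong_right)

lemma quad_form_single_point:
  assumes "m < d"
  shows "quad_form d (\<lambda>k. if k = m then \<alpha> else 0) Y = cnj \<alpha> * Y m m * \<alpha>"
  using assms by (subst quad_form_supported[of "{m}"]) auto

lemma quad_form_two_points:
  assumes "i < d" and "j < d" and "i \<noteq> j"
  shows "quad_form d (\<lambda>k. if k = i then \<xi> else if k = j then \<eta> else 0) Y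
    = cnj \<xi> * Y i i * \<xi> + cnj \<xi> * Y i j * \<eta> + cnj \<eta> * Y j i * \<xi> + cnj \<eta> * Y j j * \<eta>"
  using assms by (subst quad_form_supported[of "{i, j}"]) (auto simp: algebra_simps)

lemma separable_of_sum_products:
  fixes k :: nat
  assumes "0 < k"
    and P: "\<And>l. l < k \<Longrightarrow> psd_on {..<d} (P l)" and Q: "\<And>l. l < k \<Longrightarrow> psd_on {..<d} (Q l)"
    and X: "\<And>i a j b. i < d \<Longrightarrow> a < d \<Longrightarrow> j < d \<Longrightarrow> b < d \<Longrightarrow>
      X (i, a) (j, b) = (\<Sum>l<k. P l i j * Q l a b)"
  shows "separable d X"
  unfolding separable_def
proof (rule exI[of _ k], rule exI[of _ "\<lambda>_. 1 / real k"],
    rule exI[of _ "\<lambda>l i j. of_real (real k) * P l i j"], rule exI[of _ Q], intro conjI)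
  show "\<forall>l<k. 0 \<le> 1 / real k \<and> psd_on {..<d} (\<lambda>i j. of_real (real k) * P l i j) \<and> psd_on {..<d} (Q l)"
    using P Q psd_on_scale[OF P, of _ "real k"] by simp
  show "(\<Sum>l<k. 1 / real k) = 1" using \<open>0 < k\<close> by simp
  show "\<forall>i<d. \<forall>a<d. \<forall>j<d. \<forall>b<d.
      X (i, a) (j, b) = (\<Sum>l<k. complex_of_real (1 / real k) * (of_real (real k) * P l i j) * Q l a b)"
    using \<open>0 < k\<close> X by simp
qed

lemma psd_on_quad_form_partial:
  fixes X :: "nat \<times> nat \<Rightarrow> nat \<times> nat \<Rightarrow> complex"
  assumes "psd_on ({..<n} \<times> {..<d}) X"
  shows "psd_on {..<n} (\<lambda>i j. quad_form d r (\<lambda>e c. X (i, e) (j, c)))"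
  unfolding psd_on_def
proof
  fix v :: "nat \<Rightarrow> complex"
  define u where "u p = v (fst p) * r (snd p)" for p
  have entry: "cnj (v i) * quad_form d r (\<lambda>e c. X (i, e) (j, c)) * v j
      = (\<Sum>e<d. \<Sum>c<d. cnj (u (i, e)) * X (i, e) (j, c) * u (j, c))" for i j
    unfolding quad_form_def u_def sum_distrib_left sum_distrib_right by (simp add: mult_ac)
  have "(\<Sum>i<n. \<Sum>j<n. cnj (v i) * quad_form d r (\<lambda>e c. X (i, e) (j, c)) * v j)
      = (\<Sum>i<n. \<Sum>e<d. \<Sum>j<n. \<Sum>c<d. cnj (u (i, e)) * X (i, e) (j, c) * u (j, c))"
    unfolding entry by (rule sum.cong[OF refl], rule sum.swap)
  also have "\<dots> = (\<Sum>p\<in>{..<n} \<times> {..<d}. \<Sum>p'\<in>{..<n} \<times> {..<d}. cnj (u p) * X p p' * u p')"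
    by (simp only: sum.cartesian_product')
  finally show "0 \<le> (\<Sum>i<n. \<Sum>j<n. cnj (v i) * quad_form d r (\<lambda>e c. X (i, e) (j, c)) * v j)"
    using spec[OF assms[unfolded psd_on_def], of u] by simp
qed

definition measure_prepare :: "nat \<Rightarrow> (cmat \<Rightarrow> cmat) \<Rightarrow> bool" where
  "measure_prepare d \<Phi> \<longleftrightarrow> (\<exists>L :: ((nat \<Rightarrow> complex) \<times> (nat \<Rightarrow> complex)) list.
     \<forall>Y a b. a < d \<longrightarrow> b < d \<longrightarrow> \<Phi> Y a b = (\<Sum>(r, q)\<leftarrow>L. quad_form d r Y * q a * cnj (q b)))"

lemma measure_prepare_cong:
  assumes "measure_prepare d \<Phi>" and "\<And>Y a b. a < d \<Longrightarrow> b < d \<Longrightarrow> \<Psi> Y a b = \<Phi> Y a b"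
  shows "measure_prepare d \<Psi>"
  using assms unfolding measure_prepare_def by auto

lemma measure_prepare_rank_one: "measure_prepare d (\<lambda>Y a b. quad_form d r Y * q a * cnj (q b))"
  unfolding measure_prepare_def by (rule exI[of _ "[(r, q)]"]) simp

lemma measure_prepare_add:
  assumes "measure_prepare d \<Phi>" and "measure_prepare d \<Psi>"
  shows "measure_prepare d (\<lambda>Y a b. \<Phi> Y a b + \<Psi> Y a b)"
proof -
  obtain L1 where
    "\<And>Y a b. a < d \<Longrightarrow> b < d \<Longrightarrow> \<Phi> Y a b = (\<Sum>(r, q)\<leftarrow>L1. quad_form d r Y * q a * cnj (q b))"
    using assms(1) unfolding measure_prepare_def by blast
  moreover obtain L2 where
    "\<And>Y a b. a < d \<Longrightarrow> b < d \<Longrightarrow> \<Psi> Y a b = (\<Sum>(r, q)\<leftarrow>L2. quad_form d r Y * q a * cnj (q b))"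
    using assms(2) unfolding measure_prepare_def by blast
  ultimately show ?thesis unfolding measure_prepare_def by (intro exI[of _ "L1 @ L2"]) simp
qed

lemma measure_prepare_sum:
  assumes "finite S" and "\<And>s. s \<in> S \<Longrightarrow> measure_prepare d (\<Phi> s)"
  shows "measure_prepare d (\<lambda>Y a b. \<Sum>s\<in>S. \<Phi> s Y a b)"
  using assms
proof (induction S rule: finite_induct)
  case empty
  show ?case unfolding measure_prepare_def by (intro exI[of _ "[]"]) simp
next
  case (insert s S)
  then show ?case by (simp add: measure_prepare_add)
qed

lemma measure_prepare_transp:
  assumes "measure_prepare d \<Phi>"
  shows "measure_prepare d (transp \<circ> \<Phi>)"
proof -
  obtain L where
    L: "\<And>Y a b. a < d \<Longrightarrow> b < d \<Longrightarrow> \<Phi> Y a b = (\<Sum>(r, q)\<leftarrow>L. quad_form d r Y * q a * cnj (q b))"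
    using assms unfolding measure_prepare_def by blast
  show ?thesis unfolding measure_prepare_def
  proof (intro exI[of _ "map (\<lambda>(r, q). (r, \<lambda>a. cnj (q a))) L"] allI impI)
    fix Y a b assume "a < d" "b < d"
    then show "(transp \<circ> \<Phi>) Y a b
        = (\<Sum>(r, q)\<leftarrow>map (\<lambda>(r, q). (r, \<lambda>a. cnj (q a))) L. quad_form d r Y * q a * cnj (q b))"
      by (simp add: L transp_def case_prod_unfold o_def mult_ac)
  qed
qed

lemma measure_prepare_diag_entry:
  assumes "m < d" and "0 \<le> t"
  shows "measure_prepare d (\<lambda>Y a b. if a = n \<and> b = n then of_real t * Y m m else 0)"
proof (rule measure_prepare_cong[OF measure_prepare_rank_one])
  fix Y a b
  let ?r = "\<lambda>k. if k = m then complex_of_real (sqrt t) else 0" and ?q = "\<lambda>k. if k = n then 1 else 0"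
  have "complex_of_real (sqrt t) * complex_of_real (sqrt t) = of_real t"
    using assms(2) by (metis of_real_mult real_sqrt_mult_self abs_of_nonneg)
  then have "quad_form d ?r Y = of_real t * Y m m"
    using assms(1) by (simp add: quad_form_single_point mult_ac)
  then show "(if a = n \<and> b = n then of_real t * Y m m else 0) = quad_form d ?r Y * ?q a * cnj (?q b)"
    by simp
qed

lemma measure_prepare_entanglement_breaking:
  assumes "measure_prepare d \<Phi>"
  shows "entanglement_breaking d \<Phi>"
proof -
  obtain L0 where L0: "\<And>Y a b. a < d \<Longrightarrow> b < d \<Longrightarrow>
      \<Phi> Y a b = (\<Sum>(r, q)\<leftarrow>L0. quad_form d r Y * q a * cnj (q b))"
    using assms unfolding measure_prepare_def by blast
  \<comment> \<open>A zero term makes the list nonempty, so that the convex weights below are defined.\<close>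
  define L where "L = (\<lambda>_. 0, \<lambda>_. 0) # L0"
  have L: "\<Phi> Y a b = (\<Sum>l<length L. quad_form d (fst (L ! l)) Y * snd (L ! l) a * cnj (snd (L ! l) b))"
    if "a < d" "b < d" for Y a b
  proof -
    have "\<Phi> Y a b = (\<Sum>(r, q)\<leftarrow>L. quad_form d r Y * q a * cnj (q b))"
      using L0[OF that] by (simp add: L_def)
    then show ?thesis unfolding sum_list_sum_nth by (simp add: atLeast0LessThan case_prod_unfold)
  qed
  show ?thesis unfolding entanglement_breaking_def
  proof (intro allI impI)
    fix X assume X: "psd_on ({..<d} \<times> {..<d}) X"
    show "separable d (ampl d \<Phi> X)"
    proof (rule separable_of_sum_products)
      show "0 < length L" by (simp add: L_def)
      show "psd_on {..<d} (\<lambda>i j. quad_form d (fst (L ! l)) (\<lambda>e c. X (i, e) (j, c)))" for l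
        by (rule psd_on_quad_form_partial[OF X])
      show "psd_on {..<d} (\<lambda>a b. snd (L ! l) a * cnj (snd (L ! l) b))" for l
        by (rule psd_on_rank_one)
      fix i a j b assume "i < d" "a < d" "j < d" "b < d"
      have restrict: "quad_form d r (\<lambda>e c. if e < d \<and> c < d then X (i, e) (j, c) else 0)
          = quad_form d r (\<lambda>e c. X (i, e) (j, c))" for r
        by (rule quad_form_cong) simp
      have "ampl d \<Phi> X (i, a) (j, b) = \<Phi> (\<lambda>e c. if e < d \<and> c < d then X (i, e) (j, c) else 0) a b"
        by (simp add: ampl_def)
      then show "ampl d \<Phi> X (i, a) (j, b) = (\<Sum>l<length L.
          quad_form d (fst (L ! l)) (\<lambda>e c. X (i, e) (j, c)) * (snd (L ! l) a * cnj (snd (L ! l) b)))"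
        unfolding L[OF \<open>a < d\<close> \<open>b < d\<close>] restrict by (simp add: mult.assoc)
    qed
  qed
qed

section \<open>Splitting into two-by-two blocks\<close>

definition pair_map :: "nat \<Rightarrow> nat \<Rightarrow> real \<Rightarrow> real \<Rightarrow> real \<Rightarrow> real \<Rightarrow> complex \<Rightarrow> cmat \<Rightarrow> cmat" where
  "pair_map i j \<alpha> \<beta> \<gamma> \<delta> z Y = (\<lambda>a b.
     if a = i \<and> b = i then of_real \<alpha> * Y i i + of_real \<beta> * Y j j
     else if a = j \<and> b = j then of_real \<gamma> * Y i i + of_real \<delta> * Y j j
     else if a = i \<and> b = j then z * Y i j
     else if a = j \<and> b = i then cnj z * Y j i
     else 0)"

lemma pair_map_diag:
  assumes "i \<noteq> j"
  shows "pair_map i j \<alpha> \<beta> \<gamma> \<delta> z Y a a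
    = (if a = i then of_real \<alpha> * Y i i + of_real \<beta> * Y j j else 0)
    + (if a = j then of_real \<gamma> * Y i i + of_real \<delta> * Y j j else 0)"
  using assms by (simp add: pair_map_def)

lemma pair_map_off_diag:
  assumes "a \<noteq> b"
  shows "pair_map i j \<alpha> \<beta> \<gamma> \<delta> z Y a b
    = (if a = i \<and> b = j then z * Y a b else 0) + (if a = j \<and> b = i then cnj z * Y a b else 0)"
  using assms by (auto simp: pair_map_def)

lemma pair_map_split:
  "pair_map i j \<alpha> \<beta> (\<gamma> + \<gamma>') (\<delta> + \<delta>') z Y a b
    = pair_map i j \<alpha> \<beta> \<gamma> \<delta> z Y a b + pair_map i j 0 0 \<gamma>' \<delta>' 0 Y a b"
  by (auto simp: pair_map_def algebra_simps)

lemma measure_prepare_pair_map_tight: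
  fixes x y :: real and w :: complex
  assumes "i < d" and "j < d" and "i \<noteq> j"
  shows "measure_prepare d (pair_map i j (x\<^sup>2) (y\<^sup>2) (4 * (cmod w)\<^sup>2 * x\<^sup>2) (4 * (cmod w)\<^sup>2 * y\<^sup>2)
    (2 * of_real (x * y) * cnj w))"
  unfolding measure_prepare_def
proof (intro exI allI impI)
  let ?v = "\<lambda>\<xi> \<eta> k. if k = i then \<xi> else if k = j then \<eta> else 0"
  let ?L = "map (\<lambda>\<theta>. (?v (of_real x) (\<theta> * of_real y), ?v (1 / 2) (\<theta> * w))) [1, \<i>, - 1, - \<i>]"
  \<comment> \<open>Averaging over the fourth roots of unity \<theta> cancels all cross terms except those at (i,j) and (j,i).\<close>
  fix Y a b assume "a < d" "b < d"
  have w: "(complex_of_real (cmod w))\<^sup>2 = w * cnj w"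
    by (metis complex_norm_square of_real_power)
  show "pair_map i j (x\<^sup>2) (y\<^sup>2) (4 * (cmod w)\<^sup>2 * x\<^sup>2) (4 * (cmod w)\<^sup>2 * y\<^sup>2) (2 * of_real (x * y) * cnj w) Y a b
      = (\<Sum>(r, q)\<leftarrow>?L. quad_form d r Y * q a * cnj (q b))"
    using assms by (simp add: quad_form_two_points pair_map_def w) (auto simp: field_simps power2_eq_square)
qed

lemma measure_prepare_pair_map_lower_diag:
  assumes "i < d" and "j < d" and "i \<noteq> j" and "0 \<le> \<gamma>" and "0 \<le> \<delta>"
  shows "measure_prepare d (pair_map i j 0 0 \<gamma> \<delta> 0)"
proof (rule measure_prepare_cong)
  show "measure_prepare d (\<lambda>Y a b. (if a = j \<and> b = j then of_real \<gamma> * Y i i else 0)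
      + (if a = j \<and> b = j then of_real \<delta> * Y j j else 0))"
    using assms by (intro measure_prepare_add measure_prepare_diag_entry)
  show "pair_map i j 0 0 \<gamma> \<delta> 0 Y a b = (if a = j \<and> b = j then of_real \<gamma> * Y i i else 0)
      + (if a = j \<and> b = j then of_real \<delta> * Y j j else 0)" for Y a b
    using assms(3) by (auto simp: pair_map_def)
qed

lemma measure_prepare_pair_map:
  assumes "i < d" and "j < d" and "i \<noteq> j"
    and "0 \<le> \<alpha>" and "0 \<le> \<beta>" and "0 \<le> \<gamma>" and "0 \<le> \<delta>"
    and bound_\<alpha>\<delta>: "(cmod z)\<^sup>2 \<le> \<alpha> * \<delta>" and bound_\<beta>\<gamma>: "(cmod z)\<^sup>2 \<le> \<beta> * \<gamma>"
  shows "measure_prepare d (pair_map i j \<alpha> \<beta> \<gamma> \<delta> z)"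
proof -
  define x y where "x = sqrt \<alpha>" and "y = sqrt \<beta>"
  define w where "w = cnj z / (2 * of_real (x * y))"
  define \<gamma>' \<delta>' where "\<gamma>' = (cmod z)\<^sup>2 / \<beta>" and "\<delta>' = (cmod z)\<^sup>2 / \<alpha>"
  \<comment> \<open>For z = 0 some divisors may vanish; as x / 0 = 0, then w = \<gamma>' = \<delta>' = 0 and tight still holds.\<close>
  have tight: "pair_map i j \<alpha> \<beta> \<gamma>' \<delta>' z
      = pair_map i j (x\<^sup>2) (y\<^sup>2) (4 * (cmod w)\<^sup>2 * x\<^sup>2) (4 * (cmod w)\<^sup>2 * y\<^sup>2) (2 * of_real (x * y) * cnj w)"
  proof (cases "z = 0")
    case True
    then show ?thesis using assms by (simp add: x_def y_def w_def \<gamma>'_def \<delta>'_def)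
  next
    case False
    then have "0 < (cmod z)\<^sup>2" by simp
    then have "0 < \<alpha> * \<delta>" "0 < \<beta> * \<gamma>" using bound_\<alpha>\<delta> bound_\<beta>\<gamma> by linarith+
    then have "0 < \<alpha>" "0 < \<beta>" using assms(4-7) by (auto simp: zero_less_mult_iff)
    then show ?thesis
      by (simp add: x_def y_def w_def \<gamma>'_def \<delta>'_def norm_divide norm_mult field_simps)
  qed
  have "\<gamma>' \<le> \<gamma>" "\<delta>' \<le> \<delta>"
    using assms(4-7) bound_\<alpha>\<delta> bound_\<beta>\<gamma>
    by (auto simp: \<gamma>'_def \<delta>'_def divide_le_eq mult.commute)
  have "measure_prepare d (\<lambda>Y a b. pair_map i j \<alpha> \<beta> \<gamma>' \<delta>' z Y a b
      + pair_map i j 0 0 (\<gamma> - \<gamma>') (\<delta> - \<delta>') 0 Y a b)"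
    using assms(1-3) \<open>\<gamma>' \<le> \<gamma>\<close> \<open>\<delta>' \<le> \<delta>\<close>
    unfolding tight by (intro measure_prepare_add measure_prepare_pair_map_tight measure_prepare_pair_map_lower_diag) auto
  then show ?thesis
    by (rule measure_prepare_cong) (simp add: pair_map_split[symmetric])
qed

lemma sum_pairs_incident:
  fixes g :: "nat \<Rightarrow> 'a::comm_monoid_add"
  assumes "a < d"
  shows "(\<Sum>j<d. \<Sum>i<j. (if a = i then g j else 0) + (if a = j then g i else 0))
    = (\<Sum>k\<in>{..<d} - {a}. g k)"
proof -
  have "(\<Sum>j<d. \<Sum>i<j. if a = i then g j else 0) = (\<Sum>j<d. if a < j then g j else 0)"
    by (intro sum.cong refl) simp
  also have "\<dots> = (\<Sum>k\<in>{a<..<d}. g k)"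
    by (simp add: sum.inter_filter[symmetric]) (intro sum.cong refl; auto)
  finally have upper: "(\<Sum>j<d. \<Sum>i<j. if a = i then g j else 0) = (\<Sum>k\<in>{a<..<d}. g k)" .
  have "(\<Sum>j<d. \<Sum>i<j. if a = j then g i else 0) = (\<Sum>j<d. if a = j then (\<Sum>i<j. g i) else 0)"
    by (intro sum.cong refl) simp
  then have lower: "(\<Sum>j<d. \<Sum>i<j. if a = j then g i else 0) = (\<Sum>k<a. g k)"
    using assms by simp
  have "{..<d} - {a} = {..<a} \<union> {a<..<d}" using assms by auto
  then have "(\<Sum>k\<in>{..<d} - {a}. g k) = (\<Sum>k\<in>{..<a} \<union> {a<..<d}. g k)" by simp
  also have "\<dots> = (\<Sum>k<a. g k) + (\<Sum>k\<in>{a<..<d}. g k)" by (rule sum.union_disjoint) auto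
  finally show ?thesis unfolding sum.distrib upper lower by (simp add: add.commute)
qed

lemma sum_pairs_point:
  fixes f :: "nat \<Rightarrow> nat \<Rightarrow> 'a::comm_monoid_add"
  assumes "a < d" and "b < d"
  shows "(\<Sum>j<d. \<Sum>i<j. if a = i \<and> b = j then f i j else 0) = (if a < b then f a b else 0)"
proof -
  have "(\<Sum>j<d. \<Sum>i<j. if a = i \<and> b = j then f i j else 0)
      = (\<Sum>j<d. if b = j then (\<Sum>i<j. if a = i then f i j else 0) else 0)"
    by (intro sum.cong refl) auto
  also have "\<dots> = (\<Sum>i<b. if a = i then f i b else 0)"
    using assms by (simp only: sum.delta' finite_lessThan lessThan_iff if_True)
  finally show ?thesis by simp
qed

lemma Phi2_eq_sum_pair_maps:
  fixes M L :: "nat \<Rightarrow> nat \<Rightarrow> real" and N :: cmat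
  assumes "a < d" and "b < d"
    and hermitian: "\<And>i j. i < d \<Longrightarrow> j < d \<Longrightarrow> i \<noteq> j \<Longrightarrow> N j i = cnj (N i j)"
  shows "Phi2 d (\<lambda>a m. of_real (M a m)) N Y a b
    = (\<Sum>j<d. \<Sum>i<j. pair_map i j (L i j) (M i j) (M j i) (L j i) (N i j) Y a b)
    + (\<Sum>n<d. if a = n \<and> b = n then of_real (M n n - (\<Sum>k\<in>{..<d} - {n}. L n k)) * Y n n else 0)"
proof (cases "a = b")
  case True
  let ?g = "\<lambda>k. of_real (L a k) * Y a a + of_real (M a k) * Y k k"
  have "(\<Sum>j<d. \<Sum>i<j. pair_map i j (L i j) (M i j) (M j i) (L j i) (N i j) Y a a)
      = (\<Sum>j<d. \<Sum>i<j. (if a = i then ?g j else 0) + (if a = j then ?g i else 0))"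
    by (intro sum.cong refl) (auto simp: pair_map_diag)
  also have "\<dots> = (\<Sum>k\<in>{..<d} - {a}. ?g k)"
    using \<open>a < d\<close> by (rule sum_pairs_incident)
  also have "\<dots> = of_real (\<Sum>k\<in>{..<d} - {a}. L a k) * Y a a + (\<Sum>k\<in>{..<d} - {a}. of_real (M a k) * Y k k)"
    by (simp add: sum.distrib sum_distrib_right)
  finally show ?thesis
    using True \<open>a < d\<close> by (simp add: Phi2_def sum.remove[of "{..<d}" a] algebra_simps)
next
  case False
  have "(\<Sum>j<d. \<Sum>i<j. pair_map i j (L i j) (M i j) (M j i) (L j i) (N i j) Y a b)
      = (\<Sum>j<d. \<Sum>i<j. if a = i \<and> b = j then N i j * Y a b else 0)
      + (\<Sum>j<d. \<Sum>i<j. if b = i \<and> a = j then cnj (N i j) * Y a b else 0)"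
    using False by (simp add: pair_map_off_diag sum.distrib conj_commute)
  also have "\<dots> = N a b * Y a b"
    using False \<open>a < d\<close> \<open>b < d\<close> hermitian[of b a] by (simp only: sum_pairs_point) auto
  finally have "(\<Sum>j<d. \<Sum>i<j. pair_map i j (L i j) (M i j) (M j i) (L j i) (N i j) Y a b) = N a b * Y a b" .
  moreover have "(\<Sum>n<d. if a = n \<and> b = n then of_real (M n n - (\<Sum>k\<in>{..<d} - {n}. L n k)) * Y n n else 0) = 0"
    using False by (intro sum.neutral) auto
  ultimately show ?thesis using False by (simp add: Phi2_def)
qed

lemma measure_prepare_Phi2:
  fixes M L :: "nat \<Rightarrow> nat \<Rightarrow> real" and N :: cmat
  assumes L_nonneg: "\<And>i j. i < d \<Longrightarrow> j < d \<Longrightarrow> i \<noteq> j \<Longrightarrow> 0 \<le> L i j"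
    and M_nonneg: "\<And>i j. i < d \<Longrightarrow> j < d \<Longrightarrow> i \<noteq> j \<Longrightarrow> 0 \<le> M i j"
    and diag_bound: "\<And>a. a < d \<Longrightarrow> (\<Sum>k\<in>{..<d} - {a}. L a k) \<le> M a a"
    and hermitian: "\<And>i j. i < d \<Longrightarrow> j < d \<Longrightarrow> i \<noteq> j \<Longrightarrow> N j i = cnj (N i j)"
    and bound_L: "\<And>i j. i < d \<Longrightarrow> j < d \<Longrightarrow> i \<noteq> j \<Longrightarrow> (cmod (N i j))\<^sup>2 \<le> L i j * L j i"
    and bound_M: "\<And>i j. i < d \<Longrightarrow> j < d \<Longrightarrow> i \<noteq> j \<Longrightarrow> (cmod (N i j))\<^sup>2 \<le> M i j * M j i"
  shows "measure_prepare d (Phi2 d (\<lambda>a m. of_real (M a m)) N)"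
proof (rule measure_prepare_cong)
  show "measure_prepare d (\<lambda>Y a b.
      (\<Sum>j<d. \<Sum>i<j. pair_map i j (L i j) (M i j) (M j i) (L j i) (N i j) Y a b)
    + (\<Sum>n<d. if a = n \<and> b = n then of_real (M n n - (\<Sum>k\<in>{..<d} - {n}. L n k)) * Y n n else 0))"
    by (intro measure_prepare_add measure_prepare_sum measure_prepare_pair_map measure_prepare_diag_entry)
      (auto simp: L_nonneg M_nonneg bound_L bound_M diag_bound)
qed (rule Phi2_eq_sum_pair_maps[OF _ _ hermitian])

section \<open>Consequences of complete positivity\<close>

definition choi_bounds :: "nat \<Rightarrow> cmat \<Rightarrow> cmat \<Rightarrow> bool" where
  "choi_bounds d A B \<longleftrightarrow>
     (\<forall>i<d. \<forall>j<d. 0 \<le> A i j) \<and>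
     (\<forall>i<d. \<forall>j<d. i \<noteq> j \<longrightarrow> B j i = cnj (B i j)) \<and>
     (\<forall>i<d. \<forall>j<d. i \<noteq> j \<longrightarrow> (cmod (B i j))\<^sup>2 \<le> Re (A i i) * Re (A j j)) \<and>
     (\<forall>i<d. \<forall>j<d. i \<noteq> j \<longrightarrow> (cmod (B i j))\<^sup>2 \<le> Re (A i j) * Re (A j i))"

lemma choi_boundsD:
  assumes "choi_bounds d A B" and "i < d" and "j < d"
  shows "0 \<le> A i j"
    and "i \<noteq> j \<Longrightarrow> B j i = cnj (B i j)"
    and "i \<noteq> j \<Longrightarrow> (cmod (B i j))\<^sup>2 \<le> Re (A i i) * Re (A j j)"
    and "i \<noteq> j \<Longrightarrow> (cmod (B i j))\<^sup>2 \<le> Re (A i j) * Re (A j i)"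
  using assms unfolding choi_bounds_def by blast+

lemma choi_bounds_transp:
  assumes "choi_bounds d A B"
  shows "choi_bounds d A (transp B)"
  unfolding choi_bounds_def transp_def
proof (intro conjI allI impI)
  fix i j assume ij: "i < d" "j < d"
  then show "0 \<le> A i j" by (rule choi_boundsD(1)[OF assms])
  assume "i \<noteq> j"
  then show "B i j = cnj (B j i)" "(cmod (B j i))\<^sup>2 \<le> Re (A i i) * Re (A j j)"
      "(cmod (B j i))\<^sup>2 \<le> Re (A i j) * Re (A j i)"
    using choi_boundsD(2-4)[OF assms ij(2,1)] by (simp_all add: mult.commute)
qed

definition max_entangled :: "nat \<times> nat \<Rightarrow> nat \<times> nat \<Rightarrow> complex" where
  "max_entangled = (\<lambda>(i, a) (j, b). if i = a \<and> j = b then 1 else 0)"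

lemma psd_on_max_entangled: "psd_on I max_entangled"
proof -
  have "max_entangled = (\<lambda>p p'. (if fst p = snd p then 1 else 0) * cnj (if fst p' = snd p' then 1 else 0))"
    by (auto simp: max_entangled_def fun_eq_iff)
  show ?thesis unfolding \<open>max_entangled = _\<close> by (rule psd_on_rank_one)
qed

lemma ampl_max_entangled:
  assumes "i < d" and "j < d"
  shows "ampl d \<Phi> max_entangled (i, a) (j, b) = \<Phi> (\<lambda>e c. if e = i \<and> c = j then 1 else 0) a b"
proof -
  have "(\<lambda>e c. if e < d \<and> c < d then max_entangled (i, e) (j, c) else 0) = (\<lambda>e c. if e = i \<and> c = j then 1 else 0)"
    using assms by (auto simp: max_entangled_def fun_eq_iff)
  then show ?thesis by (simp add: ampl_def)
qed

lemma sum_mult_matrix_unit_diag: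
  fixes A :: cmat
  assumes "i < d"
  shows "(\<Sum>k<d. A a k * (if k = i \<and> k = j then 1 else 0)) = (if i = j then A a i else 0)"
proof -
  have "A a k * (if k = i \<and> k = j then 1 else 0) = (if k = i \<and> i = j then A a k else 0)" for k
    by auto
  then show ?thesis using assms by simp
qed

lemma ampl_Phi1_max_entangled:
  assumes "i < d" and "j < d"
  shows "ampl d (Phi1 d A B) max_entangled (i, a) (j, b)
    = (if a = b then (if i = j then A a i else 0) else if a = j \<and> b = i then B a b else 0)"
  using assms by (auto simp: ampl_max_entangled Phi1_def sum_mult_matrix_unit_diag)

lemma ampl_Phi2_max_entangled:
  assumes "i < d" and "j < d"
  shows "ampl d (Phi2 d A B) max_entangled (i, a) (j, b)
    = (if a = b then (if i = j then A a i else 0) else if a = i \<and> b = j then B a b else 0)"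
  using assms by (auto simp: ampl_max_entangled Phi2_def sum_mult_matrix_unit_diag)

lemma choi_bounds_if_completely_positive:
  assumes "completely_positive d (Phi1 d A B)" and "completely_positive d (Phi2 d A B)"
  shows "choi_bounds d A B"
  unfolding choi_bounds_def
proof (intro conjI allI impI)
  let ?I = "{..<d} \<times> {..<d}"
  have choi1: "psd_on ?I (ampl d (Phi1 d A B) max_entangled)"
    and choi2: "psd_on ?I (ampl d (Phi2 d A B) max_entangled)"
    using assms psd_on_max_entangled unfolding completely_positive_def by blast+
  fix i j assume "i < d" "j < d"
  then show "0 \<le> A i j"
    using psd_on_diag_nonneg[OF choi2, of "(j, i)"] by (simp add: ampl_Phi2_max_entangled)
  assume "i \<noteq> j"
  with \<open>i < d\<close> \<open>j < d\<close> show "B j i = cnj (B i j)" "(cmod (B i j))\<^sup>2 \<le> Re (A i i) * Re (A j j)"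
    using psd_on_off_diag_entry[OF choi2, of "(i, i)" "(j, j)"] by (simp_all add: ampl_Phi2_max_entangled)
  from \<open>i \<noteq> j\<close> \<open>i < d\<close> \<open>j < d\<close> show "(cmod (B i j))\<^sup>2 \<le> Re (A i j) * Re (A j i)"
    using psd_on_off_diag_entry(2)[OF choi1, of "(j, i)" "(i, j)"] by (simp add: ampl_Phi1_max_entangled)
qed

section \<open>Compositions\<close>

definition mat_mult :: "nat \<Rightarrow> cmat \<Rightarrow> cmat \<Rightarrow> cmat" where
  "mat_mult d A C = (\<lambda>a m. \<Sum>k<d. A a k * C k m)"

definition hadamard :: "cmat \<Rightarrow> cmat \<Rightarrow> cmat" where
  "hadamard B D = (\<lambda>a b. B a b * D a b)"

lemma sum_diag_mat_mult:
  "(\<Sum>k<d. A a k * (\<Sum>m<d. C k m * Y m m)) = (\<Sum>m<d. mat_mult d A C a m * Y m m)"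
proof -
  have "(\<Sum>k<d. A a k * (\<Sum>m<d. C k m * Y m m)) = (\<Sum>k<d. \<Sum>m<d. A a k * C k m * Y m m)"
    by (simp add: sum_distrib_left mult.assoc)
  also have "\<dots> = (\<Sum>m<d. \<Sum>k<d. A a k * C k m * Y m m)" by (rule sum.swap)
  also have "\<dots> = (\<Sum>m<d. mat_mult d A C a m * Y m m)" by (simp add: mat_mult_def sum_distrib_right)
  finally show ?thesis .
qed

lemma Phi2_comp_Phi2: "Phi2 d A B \<circ> Phi2 d C D = Phi2 d (mat_mult d A C) (hadamard B D)"
  by (auto simp: fun_eq_iff Phi2_def hadamard_def sum_diag_mat_mult)

lemma Phi1_comp_Phi1: "Phi1 d A B \<circ> Phi1 d C D = Phi2 d (mat_mult d A C) (hadamard B (transp D))"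
  by (auto simp: fun_eq_iff Phi1_def Phi2_def hadamard_def transp_def sum_diag_mat_mult)

lemma Phi1_comp_Phi2:
  "Phi1 d A B \<circ> Phi2 d C D = transp \<circ> Phi2 d (mat_mult d A C) (hadamard (transp B) D)"
  by (auto simp: fun_eq_iff Phi1_def Phi2_def hadamard_def transp_def sum_diag_mat_mult)

lemma Phi2_comp_Phi1:
  "Phi2 d A B \<circ> Phi1 d C D = transp \<circ> Phi2 d (mat_mult d A C) (hadamard (transp B) (transp D))"
  by (auto simp: fun_eq_iff Phi1_def Phi2_def hadamard_def transp_def sum_diag_mat_mult)

lemma norm_mult_square_le:
  fixes x y :: complex
  assumes "(cmod x)\<^sup>2 \<le> p" and "(cmod y)\<^sup>2 \<le> q"
  shows "(cmod (x * y))\<^sup>2 \<le> p * q"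
proof -
  have "0 \<le> p" using assms(1) by (meson order_trans zero_le_power2)
  then have "(cmod x)\<^sup>2 * (cmod y)\<^sup>2 \<le> p * q" using assms by (simp add: mult_mono)
  then show ?thesis by (simp add: norm_mult power_mult_distrib)
qed

lemma measure_prepare_Phi2_mat_mult:
  assumes AB: "choi_bounds d A B" and CD: "choi_bounds d C D"
  shows "measure_prepare d (Phi2 d (mat_mult d A C) (hadamard B D))"
proof -
  define a c where "a i j = Re (A i j)" and "c i j = Re (C i j)" for i j
  have A: "A i j = of_real (a i j)" "0 \<le> a i j" and C: "C i j = of_real (c i j)" "0 \<le> c i j"
    if "i < d" "j < d" for i j
    using choi_boundsD(1)[OF AB that] choi_boundsD(1)[OF CD that]
    by (auto simp: a_def c_def less_eq_complex_def complex_eq_iff)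
  let ?M = "\<lambda>i m. \<Sum>k<d. a i k * c k m"
  have M_ge: "a i i * c i j \<le> ?M i j" if "i < d" "j < d" for i j
    using that A C by (intro member_le_sum[where f = "\<lambda>k. a i k * c k j"]) auto
  have "measure_prepare d (Phi2 d (\<lambda>i m. of_real (?M i m)) (hadamard B D))"
  proof (rule measure_prepare_Phi2[where L = "\<lambda>i j. a i j * c j i"])
    fix i j assume ij: "i < d" "j < d" "i \<noteq> j"
    show "0 \<le> a i j * c j i" "0 \<le> ?M i j" using ij A C by (auto intro: sum_nonneg)
    show "hadamard B D j i = cnj (hadamard B D i j)"
      using choi_boundsD(2)[OF AB ij] choi_boundsD(2)[OF CD ij] by (simp add: hadamard_def)
    have B: "(cmod (B i j))\<^sup>2 \<le> a i i * a j j" "(cmod (B i j))\<^sup>2 \<le> a i j * a j i"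
      and D: "(cmod (D i j))\<^sup>2 \<le> c i j * c j i"
      using choi_boundsD(3,4)[OF AB ij] choi_boundsD(4)[OF CD ij] by (simp_all add: a_def c_def)
    show "(cmod (hadamard B D i j))\<^sup>2 \<le> a i j * c j i * (a j i * c i j)"
      using norm_mult_square_le[OF B(2) D] by (simp add: hadamard_def mult_ac)
    have "(cmod (hadamard B D i j))\<^sup>2 \<le> (a i i * c i j) * (a j j * c j i)"
      using norm_mult_square_le[OF B(1) D] by (simp add: hadamard_def mult_ac)
    also have "\<dots> \<le> ?M i j * ?M j i"
      using M_ge[of i j] M_ge[of j i] ij A C by (intro mult_mono sum_nonneg mult_nonneg_nonneg) auto
    finally show "(cmod (hadamard B D i j))\<^sup>2 \<le> ?M i j * ?M j i" .
  next
    fix i assume "i < d"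
    show "(\<Sum>k\<in>{..<d} - {i}. a i k * c k i) \<le> ?M i i"
      using A C by (intro sum_mono2) auto
  qed
  then show ?thesis
  proof (rule measure_prepare_cong)
    fix Y i j assume "i < d" "j < d"
    have "(\<Sum>m<d. mat_mult d A C i m * Y m m) = (\<Sum>m<d. of_real (?M i m) * Y m m)"
      using \<open>i < d\<close> A C by (intro sum.cong refl) (simp add: mat_mult_def)
    then show "Phi2 d (mat_mult d A C) (hadamard B D) Y i j
        = Phi2 d (\<lambda>i m. of_real (?M i m)) (hadamard B D) Y i j"
      by (simp only: Phi2_def)
  qed
qed

theorem theorem4p5:
  fixes d :: nat and A B C D :: cmat
  assumes diagAB: "\<forall>i<d. A i i = B i i"
      and diagCD: "\<forall>i<d. C i i = D i i"
      and P1AB: "PPT d (Phi1 d A B)" and P2AB: "PPT d (Phi2 d A B)"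
      and P1CD: "PPT d (Phi1 d C D)" and P2CD: "PPT d (Phi2 d C D)"
  shows "entanglement_breaking d (Phi1 d A B \<circ> Phi1 d C D)
       \<and> entanglement_breaking d (Phi1 d A B \<circ> Phi2 d C D)
       \<and> entanglement_breaking d (Phi2 d A B \<circ> Phi1 d C D)
       \<and> entanglement_breaking d (Phi2 d A B \<circ> Phi2 d C D)"
proof -
  have AB: "choi_bounds d A B"
    using P1AB P2AB unfolding PPT_def by (blast intro: choi_bounds_if_completely_positive)
  have CD: "choi_bounds d C D"
    using P1CD P2CD unfolding PPT_def by (blast intro: choi_bounds_if_completely_positive)
  show ?thesis
    unfolding Phi1_comp_Phi1 Phi1_comp_Phi2 Phi2_comp_Phi1 Phi2_comp_Phi2
    by (intro conjI measure_prepare_entanglement_breaking measure_prepare_transp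
        measure_prepare_Phi2_mat_mult choi_bounds_transp AB CD)
qed

end
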